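(* Let $b'>\delta$ be fixed. For a query $\mathbf Q=(\mathbf q,v)$ with $v\in(0,\infty)$, put $b=\sqrt{v/2}$, $P(\mathbf Q)=\frac{\gamma b'}{b(b'-\delta)}\sum_{i=1}^nc_i|q_i|$, $s_i=\gamma|q_i|$, $s_i'=\frac{\gamma b'\delta|q_i|}{b(b'-\delta)}$, and define the randomized price and micro-payments $\pi(\mathbf Q)=\mathcal K'_{\mathbf Q}(\mathbf c)=P(\mathbf Q)+\rho'$, and $\mu_i(\mathbf Q)=\left(\frac{s_i}{b}+\frac{s_i'}{b'}\right)c_i+\frac{\pi(\mathbf Q)-P(\mathbf Q)}{n}$ for $i=1,\ldots,n$. Then the framework is balanced in expectation, namely: (a) $\mathbf Q\mapsto\mathbb E[\pi(\mathbf Q)]$ is arbitrage-free; (b) for each $i$, if $q_i=0$ then $\mathbb E[\mu_i(\mathbf Q)]=0$; (c) for each $i$, $\mathbf Q\mapsto\mathbb E[\mu_i(\mathbf Q)]$ is arbitrage-free; (d) $\sum_{i=1}^n\mathbb E[\mu_i(\mathbf Q)]\le\mathbb E[\pi(\mathbf Q)]$ for every query $\mathbf Q$; (e) for each $i$ and every query $\mathbf Q$, $\mathbb E[\mu_i(\mathbf Q)]\ge c_i\,(\varepsilon_i(\mathcal K_{\mathbf Q})+\varepsilon_i(\mathcal K'_{\mathbf Q}))$.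
   Context: Fix a bounded $X\subseteq\mathbb R$, $\gamma=\sup_{x\in X}|x|$; data items $x_i\in X$, databases $\mathbf x\in X^n$. Each owner $i$ has a linear contract $W_i(\varepsilon)=c_i\varepsilon$ with constant $c_i\in Y$, where $Y\subseteq[0,\infty)$ is bounded and $\delta=\sup_{c\in Y}|c|$; $\mathbf c=(c_1,\ldots,c_n)\in Y^n$. For a vector $\mathbf z$, $\mathbf z^{(i)}$ denotes $\mathbf z$ with the $i$-th coordinate set to $0$. Queries are pairs $\mathbf Q=(\mathbf q,v)$ with $\mathbf q\in\mathbb R^n$, $v\in(0,\infty)$; $b=\sqrt{v/2}$. $\mathrm{Lap}(\beta)$ is the distribution with density $\frac{1}{2\beta}e^{-|t|/\beta}$. The query mechanism is $\mathcal K_{\mathbf Q}(\mathbf x)=\mathbf q\cdot\mathbf x+\rho$ with $\rho\sim\mathrm{Lap}(b)$; the price mechanism is $\mathcal K'_{\mathbf Q}(\mathbf c)=\frac{\gamma b'}{b(b'-\delta)}\sum_ic_i|q_i|+\rho'$ with $\rho'\sim\mathrm{Lap}(b')$, independent of $\rho$. Privacy losses: $\varepsilon_i(\mathcal K_{\mathbf Q})=\sup_{S,\mathbf x\in X^n}\left|\log\frac{\Pr[\mathcal K_{\mathbf Q}(\mathbf x)\in S]}{\Pr[\mathcal K_{\mathbf Q}(\mathbf x^{(i)})\in S]}\right|$ and $\varepsilon_i(\mathcal K'_{\mathbf Q})=\sup_{S,\mathbf c\in Y^n}\left|\log\frac{\Pr[\mathcal K'_{\mathbf Q}(\mathbf c)\in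 S]}{\Pr[\mathcal K'_{\mathbf Q}(\mathbf c^{(i)})\in S]}\right|$, suprema also over measurable $S\subseteq\mathbb R$. The determinacy relation $\mathbf S\rightarrow\mathbf Q$ is the smallest relation satisfying: (Summation) $\{(\mathbf q_1,v_1),\ldots,(\mathbf q_k,v_k)\}\rightarrow(\sum_j\mathbf q_j,\sum_jv_j)$; (Scalar multiplication) $\{(\mathbf q,v)\}\rightarrow(c\mathbf q,c^2v)$ for $c\in\mathbb R$; (Relaxation) $\{(\mathbf q,v)\}\rightarrow(\mathbf q,v')$ for $v\le v'$; (Transitivity) if $\mathbf S_j\rightarrow\mathbf Q_j$ for all $j$ and $\{\mathbf Q_1,\ldots,\mathbf Q_k\}\rightarrow\mathbf Q$ then $\mathbf S_1\uplus\cdots\uplus\mathbf S_k\rightarrow\mathbf Q$. A real function $g$ on queries with $v\in(0,\infty)$ is arbitrage-free if for every $m\ge1$ and such queries with $\{\mathbf Q_1,\ldots,\mathbf Q_m\}\rightarrow\mathbf Q$, $g(\mathbf Q)\le\sum_jg(\mathbf Q_j)$. *)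

theory Defs
  imports "HOL-Probability.Probability"
begin

text \<open>Data owners are indexed by a finite type 'n; n = CARD('n).
  A query is a pair (q, v) with q in R^n and v a real (the variance).\<close>

type_synonym 'n query = "(real ^ 'n) \<times> real"

definition gam :: "real set \<Rightarrow> real" where
  "gam X = (SUP x\<in>X. \<bar>x\<bar>)"

definition del :: "real set \<Rightarrow> real" where
  "del Y = (SUP c\<in>Y. \<bar>c\<bar>)"

definition lap_scale :: "real \<Rightarrow> real" where
  "lap_scale v = sqrt (v / 2)"

definition laplace :: "real \<Rightarrow> real measure" where
  "laplace \<beta> = density lborel (\<lambda>t. ennreal (exp (- \<bar>t\<bar> / \<beta>) / (2 * \<beta>)))"

definition zero_at :: "real ^ 'n \<Rightarrow> 'n \<Rightarrow> real ^ 'n" where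
  "zero_at z i = (\<chi> j. if j = i then 0 else z $ j)"

definition K_mech :: "('n::finite) query \<Rightarrow> real ^ 'n \<Rightarrow> real measure" where
  "K_mech Q x = distr (laplace (lap_scale (snd Q))) borel
                   (\<lambda>r. (\<Sum>j\<in>UNIV. fst Q $ j * x $ j) + r)"

definition price_det :: "real \<Rightarrow> real \<Rightarrow> real \<Rightarrow> real ^ ('n::finite) \<Rightarrow> 'n query \<Rightarrow> real" where
  "price_det \<gamma> \<delta> b' c Q =
     \<gamma> * b' / (lap_scale (snd Q) * (b' - \<delta>)) * (\<Sum>j\<in>UNIV. c $ j * \<bar>fst Q $ j\<bar>)"

definition K'_mech :: "real \<Rightarrow> real \<Rightarrow> real \<Rightarrow> ('n::finite) query \<Rightarrow> real ^ 'n \<Rightarrow> real measure" where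
  "K'_mech \<gamma> \<delta> b' Q c = distr (laplace b') borel (\<lambda>r. price_det \<gamma> \<delta> b' c Q + r)"

text \<open>|log (p1/p2)| with the conventions log(p/0) = infinity for p > 0 (and pairs
  with p1 = p2 = 0 are excluded from the suprema below).\<close>
definition logratio :: "real \<Rightarrow> real \<Rightarrow> ereal" where
  "logratio p1 p2 = (if 0 < p1 \<and> 0 < p2 then ereal \<bar>ln (p1 / p2)\<bar> else \<infinity>)"

definition eps_K :: "real set \<Rightarrow> ('n::finite) query \<Rightarrow> 'n \<Rightarrow> ereal" where
  "eps_K X Q i = Sup {logratio (measure (K_mech Q x) S) (measure (K_mech Q (zero_at x i)) S) | S x.
       S \<in> sets borel \<and> (\<forall>j. x $ j \<in> X) \<and>
       (0 < measure (K_mech Q x) S \<or> 0 < measure (K_mech Q (zero_at x i)) S)}"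

definition eps_K' :: "real \<Rightarrow> real \<Rightarrow> real \<Rightarrow> real set \<Rightarrow> ('n::finite) query \<Rightarrow> 'n \<Rightarrow> ereal" where
  "eps_K' \<gamma> \<delta> b' Y Q i = Sup {logratio (measure (K'_mech \<gamma> \<delta> b' Q c) S)
                                        (measure (K'_mech \<gamma> \<delta> b' Q (zero_at c i)) S) | S c.
       S \<in> sets borel \<and> (\<forall>j. c $ j \<in> Y) \<and>
       (0 < measure (K'_mech \<gamma> \<delta> b' Q c) S \<or> 0 < measure (K'_mech \<gamma> \<delta> b' Q (zero_at c i)) S)}"

text \<open>Randomized price pi(Q) as a function of the noise rho' = r.\<close>
definition rand_price :: "real \<Rightarrow> real \<Rightarrow> real \<Rightarrow> real ^ ('n::finite) \<Rightarrow> 'n query \<Rightarrow> real \<Rightarrow> real" where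
  "rand_price \<gamma> \<delta> b' c Q r = price_det \<gamma> \<delta> b' c Q + r"

definition micro :: "real \<Rightarrow> real \<Rightarrow> real \<Rightarrow> real ^ ('n::finite) \<Rightarrow> 'n query \<Rightarrow> 'n \<Rightarrow> real \<Rightarrow> real" where
  "micro \<gamma> \<delta> b' c Q i r =
     (let b = lap_scale (snd Q);
          s = \<gamma> * \<bar>fst Q $ i\<bar>;
          s' = \<gamma> * b' * \<delta> * \<bar>fst Q $ i\<bar> / (b * (b' - \<delta>))
      in (s / b + s' / b') * c $ i
         + (rand_price \<gamma> \<delta> b' c Q r - price_det \<gamma> \<delta> b' c Q) / real CARD('n))"

definition E_price :: "real \<Rightarrow> real \<Rightarrow> real \<Rightarrow> real ^ ('n::finite) \<Rightarrow> 'n query \<Rightarrow> real" where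
  "E_price \<gamma> \<delta> b' c Q = integral\<^sup>L (laplace b') (rand_price \<gamma> \<delta> b' c Q)"

definition E_micro :: "real \<Rightarrow> real \<Rightarrow> real \<Rightarrow> real ^ ('n::finite) \<Rightarrow> 'n query \<Rightarrow> 'n \<Rightarrow> real" where
  "E_micro \<gamma> \<delta> b' c Q i = integral\<^sup>L (laplace b') (micro \<gamma> \<delta> b' c Q i)"

inductive determines :: "('n::finite) query multiset \<Rightarrow> 'n query \<Rightarrow> bool" where
  summation: "S \<noteq> {#} \<Longrightarrow> (\<forall>Q\<in>#S. 0 < snd Q) \<Longrightarrow>
      determines S (\<Sum>Q\<in>#S. fst Q, \<Sum>Q\<in>#S. snd Q)"
| scalar: "0 < v \<Longrightarrow> 0 < a\<^sup>2 * v \<Longrightarrow> determines {#(q, v)#} (a *s q, a\<^sup>2 * v)"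
| relax: "0 < v \<Longrightarrow> v \<le> v' \<Longrightarrow> determines {#(q, v)#} (q, v')"
| trans: "L \<noteq> [] \<Longrightarrow> (\<forall>p\<in>set L. determines (fst p) (snd p)) \<Longrightarrow>
      determines (mset (map snd L)) Q \<Longrightarrow>
      determines (sum_list (map fst L)) Q"

definition arbitrage_free :: "(('n::finite) query \<Rightarrow> real) \<Rightarrow> bool" where
  "arbitrage_free g \<longleftrightarrow>
     (\<forall>S Q. S \<noteq> {#} \<longrightarrow> (\<forall>Q'\<in>#S. 0 < snd Q') \<longrightarrow> 0 < snd Q \<longrightarrow> determines S Q
        \<longrightarrow> g Q \<le> (\<Sum>Q'\<in>#S. g Q'))"

end

theory Submission
  imports Defs
begin

text \<open>
  The noise of both mechanisms has mean zero, so with \<open>K = \<gamma> b' / (b' - \<delta>)\<close> the expected price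
  is \<open>K (\<Sum>j. c\<^sub>j |q\<^sub>j|) / b\<close> and the expected micro-payment of owner \<open>i\<close> is \<open>K c\<^sub>i |q\<^sub>i| / b\<close>.
  Both are nonnegative multiples of a ratio \<open>h(q) / b(v)\<close> with \<open>h\<close> a seminorm, and such a ratio
  is subadditive along the determinacy relation: summation is the triangle inequality
  together with monotonicity of \<open>b = \<surd>(v/2)\<close>, scalar multiplication scales \<open>h\<close> and \<open>b\<close> by the
  same factor \<open>|a|\<close>, and relaxation only increases \<open>b\<close>. Summing the micro-payments gives the
  expected price exactly.

  For the privacy bound, zeroing the \<open>i\<close>-th entry shifts the mean of the query answer by at
  most \<open>\<gamma> |q\<^sub>i|\<close> and the mean of the price by \<open>K c\<^sub>i |q\<^sub>i| \<le> b' \<gamma> \<delta> |q\<^sub>i| / (b (b' - \<delta>))\<close>, and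
  shifting a Laplace distribution of scale \<open>\<beta>\<close> by \<open>d\<close> changes every probability by a factor
  of at most \<open>exp (d / \<beta>)\<close>. Weighting the two resulting loss bounds by \<open>c\<^sub>i\<close> gives exactly
  the expected micro-payment.
\<close>

lemma lap_scale_pos: "0 < v \<Longrightarrow> 0 < lap_scale v"
  by (simp add: lap_scale_def)

lemma lap_scale_mono: "v \<le> v' \<Longrightarrow> lap_scale v \<le> lap_scale v'"
  by (simp add: lap_scale_def)

lemma lap_scale_scale: "lap_scale (a\<^sup>2 * v) = \<bar>a\<bar> * lap_scale v"
  by (simp add: lap_scale_def real_sqrt_mult flip: times_divide_eq_right)

lemma sum_mset_sum_list_of_multisets:
  "(\<Sum>x\<in>#sum_list Ms. g x) = (\<Sum>M\<leftarrow>Ms. \<Sum>x\<in>#M. (g x :: real))"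
  by (induction Ms) auto

definition noise_ratio :: "(real ^ 'n \<Rightarrow> real) \<Rightarrow> 'n query \<Rightarrow> real" where
  "noise_ratio h Q = h (fst Q) / lap_scale (snd Q)"

locale query_seminorm =
  fixes h :: "real ^ ('n::finite) \<Rightarrow> real"
  assumes nonneg: "0 \<le> h q"
    and subadditive: "h (q + r) \<le> h q + h r"
    and abs_homogeneous: "h (a *s q) = \<bar>a\<bar> * h q"
begin

lemma subadditive_sum_mset: "h (\<Sum>Q\<in>#S. fst Q) \<le> (\<Sum>Q\<in>#S. h (fst Q))"
proof (induction S)
  case empty
  show ?case using abs_homogeneous[of 0 0] by simp
next
  case (add Q S)
  then show ?case using subadditive[of "fst Q" "\<Sum>Q\<in>#S. fst Q"] by simp
qed

lemma noise_ratio_nonneg: "0 < snd Q \<Longrightarrow> 0 \<le> noise_ratio h Q"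
  by (simp add: noise_ratio_def nonneg lap_scale_pos less_imp_le)

lemma noise_ratio_summation:
  assumes "\<forall>Q\<in>#S. 0 < snd Q"
  shows "noise_ratio h (\<Sum>Q\<in>#S. fst Q, \<Sum>Q\<in>#S. snd Q) \<le> (\<Sum>Q\<in>#S. noise_ratio h Q)"
proof -
  let ?b = "lap_scale (\<Sum>Q\<in>#S. snd Q)"
  have b_le: "lap_scale (snd Q) \<le> ?b" if "Q \<in># S" for Q
  proof (rule lap_scale_mono)
    have "0 \<le> (\<Sum>Q\<in>#S - {#Q#}. snd Q)"
      using sum_mset_mono[of "S - {#Q#}" "\<lambda>_. 0" snd] assms
      by (simp add: less_imp_le[OF bspec[OF assms in_diffD]])
    then show "snd Q \<le> (\<Sum>Q\<in>#S. snd Q)"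
      using sum_mset.remove[of "snd Q" "image_mset snd S"] that by (simp add: image_mset_Diff)
  qed
  have "h (\<Sum>Q\<in>#S. fst Q) \<le> (\<Sum>Q\<in>#S. h (fst Q))"
    by (rule subadditive_sum_mset)
  also have "\<dots> = (\<Sum>Q\<in>#S. noise_ratio h Q * lap_scale (snd Q))"
    using assms by (intro arg_cong[where f=sum_mset] image_mset_cong)
      (simp add: noise_ratio_def lap_scale_pos less_imp_neq[symmetric])
  also have "\<dots> \<le> (\<Sum>Q\<in>#S. noise_ratio h Q * ?b)"
    using b_le assms by (intro sum_mset_mono mult_left_mono noise_ratio_nonneg) auto
  finally have calc: "h (\<Sum>Q\<in>#S. fst Q) \<le> (\<Sum>Q\<in>#S. noise_ratio h Q) * ?b"
    by (simp add: sum_mset_distrib_right)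
  show ?thesis
  proof (cases "S = {#}")
    case False
    then obtain Q where "Q \<in># S" by blast
    then have "0 < ?b"
      using assms b_le lap_scale_pos[of "snd Q"] by (meson order.strict_trans2)
    with calc show ?thesis by (simp add: noise_ratio_def divide_le_eq)
  qed (simp add: noise_ratio_def lap_scale_def)
qed

lemma noise_ratio_determines:
  "determines S Q \<Longrightarrow> noise_ratio h Q \<le> (\<Sum>Q'\<in>#S. noise_ratio h Q')"
proof (induction rule: determines.induct)
  case (summation S)
  then show ?case by (simp add: noise_ratio_summation)
next
  case (scalar v a q)
  then show ?case by (auto simp: noise_ratio_def abs_homogeneous lap_scale_scale)
next
  case (relax v v' q)
  then show ?case
    by (simp add: noise_ratio_def divide_left_mono nonneg lap_scale_mono lap_scale_pos
        mult_pos_pos)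
next
  case (trans L Q)
  have "noise_ratio h Q \<le> (\<Sum>p\<leftarrow>L. noise_ratio h (snd p))"
    using trans.IH(2) by (simp add: sum_mset_sum_list o_def flip: mset_map)
  also have "\<dots> \<le> (\<Sum>p\<leftarrow>L. \<Sum>Q'\<in>#fst p. noise_ratio h Q')"
    using trans.IH(1) by (intro sum_list_mono) blast
  finally show ?case
    by (simp add: sum_mset_sum_list_of_multisets o_def)
qed

lemma arbitrage_free_scaled_noise_ratio:
  assumes "0 \<le> K" and "\<And>Q. 0 < snd Q \<Longrightarrow> g Q = K * noise_ratio h Q"
  shows "arbitrage_free g"
  unfolding arbitrage_free_def
proof (intro allI impI)
  fix S and Q :: "'n query"
  assume S: "\<forall>Q'\<in>#S. 0 < snd Q'" and "0 < snd Q" and "determines S Q"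
  then have "g Q \<le> K * (\<Sum>Q'\<in>#S. noise_ratio h Q')"
    using assms noise_ratio_determines by (simp add: mult_left_mono)
  also have "\<dots> = (\<Sum>Q'\<in>#S. g Q')"
    using S assms(2) by (simp add: sum_mset_distrib_left cong: image_mset_cong)
  finally show "g Q \<le> (\<Sum>Q'\<in>#S. g Q')" .
qed

end

lemma nn_integral_exp_neg_Ici:
  assumes "0 < b"
  shows "(\<integral>\<^sup>+t. ennreal (exp (- t / b)) * indicator {0..} t \<partial>lborel) = ennreal b"
proof -
  have "(\<integral>\<^sup>+t. ennreal (exp (- t / b)) * indicator {0..} t \<partial>lborel)
      = ennreal b * (\<integral>\<^sup>+x. ennreal (exp (- (0 + b * x) / b)) * indicator {0..} (0 + b * x) \<partial>lborel)"
    using assms by (subst nn_integral_real_affine[where c=b and t=0]) auto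
  also have "(\<integral>\<^sup>+x. ennreal (exp (- (0 + b * x) / b)) * indicator {0..} (0 + b * x) \<partial>lborel)
      = (\<integral>\<^sup>+x. ennreal (x ^ 0 * exp (- x)) * indicator {0..} x \<partial>lborel)"
    using assms by (intro nn_integral_cong) (auto split: split_indicator simp: zero_le_mult_iff)
  finally show ?thesis
    using nn_intergal_power_times_exp_Ici[of 0] by simp
qed

lemma nn_integral_exp_neg_abs:
  assumes "0 < b"
  shows "(\<integral>\<^sup>+t. ennreal (exp (- \<bar>t\<bar> / b)) \<partial>lborel) = ennreal (2 * b)"
proof -
  define f where "f t = ennreal (exp (- t / b)) * indicator {0..} t" for t :: real
  have "AE t in lborel. ennreal (exp (- \<bar>t\<bar> / b)) = f t + f (- t)"
    using AE_lborel_singleton[of 0] by eventually_elim (auto simp: f_def split: split_indicator)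
  then have "(\<integral>\<^sup>+t. ennreal (exp (- \<bar>t\<bar> / b)) \<partial>lborel) = (\<integral>\<^sup>+t. f t \<partial>lborel) + (\<integral>\<^sup>+t. f (- t) \<partial>lborel)"
    by (simp add: nn_integral_cong_AE nn_integral_add f_def)
  also have "(\<integral>\<^sup>+t. f (- t) \<partial>lborel) = (\<integral>\<^sup>+t. f t \<partial>lborel)"
    using nn_integral_real_affine[of f "-1" 0] by (simp add: f_def[abs_def])
  finally show ?thesis
    using assms nn_integral_exp_neg_Ici[OF assms] by (simp add: f_def flip: ennreal_plus)
qed

lemma prob_space_laplace:
  assumes "0 < b"
  shows "prob_space (laplace b)"
proof
  have "emeasure (laplace b) (space (laplace b))
      = (\<integral>\<^sup>+t. ennreal (1 / (2 * b)) * ennreal (exp (- \<bar>t\<bar> / b)) \<partial>lborel)"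
    using assms unfolding laplace_def
    by (subst emeasure_density) (auto intro!: nn_integral_cong simp flip: ennreal_mult)
  also have "\<dots> = ennreal (1 / (2 * b)) * ennreal (2 * b)"
    using assms nn_integral_exp_neg_abs[OF assms] by (simp add: nn_integral_cmult)
  also have "\<dots> = 1"
    using assms by (simp flip: ennreal_mult)
  finally show "emeasure (laplace b) (space (laplace b)) = 1" .
qed

lemma integrable_laplace_id:
  assumes "0 < b"
  shows "integrable (laplace b) (\<lambda>r. r)"
proof -
  have majorant: "integrable lborel (\<lambda>t. exp (- \<bar>t\<bar> / (2 * b)))"
    using assms nn_integral_exp_neg_abs[of "2 * b"] by (subst integrable_iff_bounded) auto
  have "norm (exp (- \<bar>t\<bar> / b) / (2 * b) * t) \<le> norm (exp (- \<bar>t\<bar> / (2 * b)))" for t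
  proof -
    have "norm (exp (- \<bar>t\<bar> / b) / (2 * b) * t) = \<bar>t\<bar> / (2 * b) * exp (- \<bar>t\<bar> / b)"
      using assms by (simp add: abs_mult)
    also have "\<dots> \<le> exp (\<bar>t\<bar> / (2 * b)) * exp (- \<bar>t\<bar> / b)"
      using exp_ge_add_one_self[of "\<bar>t\<bar> / (2 * b)"] by (intro mult_right_mono) (linarith, simp)
    also have "\<dots> = norm (exp (- \<bar>t\<bar> / (2 * b)))"
      using assms by (simp add: field_simps flip: exp_add)
    finally show ?thesis .
  qed
  then have "integrable lborel (\<lambda>t. exp (- \<bar>t\<bar> / b) / (2 * b) * t)"
    by (intro Bochner_Integration.integrable_bound[OF majorant]) auto
  then show ?thesis
    unfolding laplace_def using assms by (subst integrable_density) auto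
qed

lemma integral_laplace_id:
  assumes "0 < b"
  shows "(\<integral>r. r \<partial>laplace b) = 0"
proof -
  define g where "g t = exp (- \<bar>t\<bar> / b) / (2 * b) * t" for t
  have "(\<integral>r. r \<partial>laplace b) = (\<integral>t. g t \<partial>lborel)"
    unfolding laplace_def g_def using assms by (subst integral_density) auto
  moreover have "(\<integral>t. g t \<partial>lborel) = - (\<integral>t. g t \<partial>lborel)"
    using lborel_integral_real_affine[of "-1" g 0] by (simp add: g_def)
  ultimately show ?thesis by simp
qed

lemma integral_laplace_affine:
  assumes "0 < b"
  shows "(\<integral>r. A + B * r \<partial>laplace b) = A"
proof -
  interpret prob_space "laplace b"
    using assms by (rule prob_space_laplace)
  show ?thesis
    using assms integrable_laplace_id integral_laplace_id by (simp add: prob_space)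
qed

definition laplace_shift :: "real \<Rightarrow> real \<Rightarrow> real measure" where
  "laplace_shift b a = distr (laplace b) borel (\<lambda>r. a + r)"

lemma prob_space_laplace_shift: "0 < b \<Longrightarrow> prob_space (laplace_shift b a)"
  unfolding laplace_shift_def
  by (rule prob_space.prob_space_distr[OF prob_space_laplace]) (simp_all add: laplace_def)

lemma emeasure_laplace_shift:
  assumes "S \<in> sets borel"
  shows "emeasure (laplace_shift b a) S
    = (\<integral>\<^sup>+u. ennreal (exp (- \<bar>u - a\<bar> / b) / (2 * b)) * indicator S u \<partial>lborel)"
proof -
  have "(\<lambda>r. a + r) -` S \<in> sets borel"
    using measurable_sets[of "\<lambda>r. a + r" borel borel S] assms by simp
  then have "emeasure (laplace_shift b a) S
      = (\<integral>\<^sup>+t. ennreal (exp (- \<bar>t\<bar> / b) / (2 * b)) * indicator ((\<lambda>r. a + r) -` S) t \<partial>lborel)"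
    using assms unfolding laplace_shift_def laplace_def
    by (subst emeasure_distr) (auto simp: emeasure_density)
  also have "\<dots> = (\<integral>\<^sup>+t. ennreal (exp (- \<bar>(a + 1 * t) - a\<bar> / b) / (2 * b)) * indicator S (a + 1 * t) \<partial>lborel)"
    by (intro nn_integral_cong) (auto split: split_indicator)
  also have "\<dots> = (\<integral>\<^sup>+u. ennreal (exp (- \<bar>u - a\<bar> / b) / (2 * b)) * indicator S u \<partial>lborel)"
    using assms nn_integral_real_affine[of "\<lambda>u. ennreal (exp (- \<bar>u - a\<bar> / b) / (2 * b)) * indicator S u" 1 a]
    by simp
  finally show ?thesis .
qed

lemma measure_laplace_shift_le:
  assumes "0 < b" and S: "S \<in> sets borel"
  shows "measure (laplace_shift b a) S \<le> exp (\<bar>a - a'\<bar> / b) * measure (laplace_shift b a') S"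
proof -
  let ?p = "\<lambda>a u. exp (- \<bar>u - a\<bar> / b) / (2 * b)"
  have density_le: "?p a u \<le> exp (\<bar>a - a'\<bar> / b) * ?p a' u" for u
  proof -
    have "- \<bar>u - a\<bar> / b \<le> \<bar>a - a'\<bar> / b + - \<bar>u - a'\<bar> / b"
      using assms by (simp add: field_simps)
    then show ?thesis
      using assms by (simp add: divide_right_mono flip: exp_add)
  qed
  have "emeasure (laplace_shift b a) S
      \<le> (\<integral>\<^sup>+u. ennreal (exp (\<bar>a - a'\<bar> / b)) * (ennreal (?p a' u) * indicator S u) \<partial>lborel)"
    unfolding emeasure_laplace_shift[OF S] using density_le assms
    by (intro nn_integral_mono) (auto split: split_indicator simp flip: ennreal_mult)
  also have "\<dots> = ennreal (exp (\<bar>a - a'\<bar> / b)) * emeasure (laplace_shift b a') S"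
    using S by (simp add: emeasure_laplace_shift nn_integral_cmult)
  finally show ?thesis
    using assms by (simp add: finite_measure.emeasure_eq_measure prob_space.finite_measure
        prob_space_laplace_shift flip: ennreal_mult)
qed

lemma logratio_le:
  assumes "0 \<le> p1" "0 \<le> p2" "p1 \<le> exp D * p2" "p2 \<le> exp D * p1" "0 < p1 \<or> 0 < p2"
  shows "logratio p1 p2 \<le> ereal D"
proof -
  have pos: "0 < p1" "0 < p2"
    using assms by (auto simp: order.strict_iff_order intro: antisym)
  have "ln p1 \<le> ln (exp D * p2)" "ln p2 \<le> ln (exp D * p1)"
    using assms(3,4) pos by simp_all
  then have "ln p1 \<le> D + ln p2" "ln p2 \<le> D + ln p1"
    using pos by (simp_all add: ln_mult)
  then show ?thesis
    using pos by (simp add: logratio_def ln_div)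
qed

lemma logratio_laplace_shift_le:
  assumes "0 < b" "S \<in> sets borel" "\<bar>a - a'\<bar> \<le> D * b"
    and "0 < measure (laplace_shift b a) S \<or> 0 < measure (laplace_shift b a') S"
  shows "logratio (measure (laplace_shift b a) S) (measure (laplace_shift b a') S) \<le> ereal D"
proof (rule logratio_le[OF measure_nonneg measure_nonneg _ _ assms(4)])
  have "exp (\<bar>a - a'\<bar> / b) \<le> exp D"
    using assms by (simp add: divide_le_eq)
  then show "measure (laplace_shift b a) S \<le> exp D * measure (laplace_shift b a') S"
    "measure (laplace_shift b a') S \<le> exp D * measure (laplace_shift b a) S"
    using measure_laplace_shift_le[OF assms(1,2), of a a'] measure_laplace_shift_le[OF assms(1,2), of a' a]
    by (simp_all only: abs_minus_commute[of a' a])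
      (meson measure_nonneg mult_right_mono order_trans)+
qed

lemma abs_le_SUP_abs:
  assumes "bounded (X :: real set)" "x \<in> X"
  shows "\<bar>x\<bar> \<le> (SUP x\<in>X. \<bar>x\<bar>)"
  using assms by (intro cSUP_upper) (auto simp: bounded_real intro: bdd_aboveI2)

lemma gam_nonneg: "bounded X \<Longrightarrow> X \<noteq> {} \<Longrightarrow> 0 \<le> gam X"
  unfolding gam_def by (meson abs_ge_zero abs_le_SUP_abs all_not_in_conv order_trans)

lemma nonneg_le_del:
  assumes "bounded Y" "Y \<subseteq> {0..}" "y \<in> Y"
  shows "0 \<le> y" "y \<le> del Y"
  using assms abs_le_SUP_abs[of Y y] unfolding del_def by auto

lemma sum_minus_sum_zero_at:
  fixes F :: "'n::finite \<Rightarrow> real \<Rightarrow> real"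
  shows "(\<Sum>j\<in>UNIV. F j (z $ j)) - (\<Sum>j\<in>UNIV. F j (zero_at z i $ j)) = F i (z $ i) - F i 0"
proof -
  have "(\<Sum>j\<in>UNIV. F j (z $ j))
      = (\<Sum>j\<in>UNIV. F j (zero_at z i $ j) + (if j = i then F i (z $ i) - F i 0 else 0))"
    by (intro sum.cong) (auto simp: zero_at_def)
  then show ?thesis
    by (simp add: sum.distrib)
qed

lemma eps_K_le:
  assumes "bounded X" and "0 < snd Q"
  shows "eps_K X Q i \<le> ereal (gam X * \<bar>fst Q $ i\<bar> / lap_scale (snd Q))"
  unfolding eps_K_def
proof (rule Sup_least, clarify)
  fix S x
  assume S: "S \<in> sets borel" and x: "\<forall>j. x $ j \<in> X"
    and pos: "0 < measure (K_mech Q x) S \<or> 0 < measure (K_mech Q (zero_at x i)) S"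
  let ?b = "lap_scale (snd Q)" and ?a = "\<lambda>x. \<Sum>j\<in>UNIV. fst Q $ j * x $ j"
  have "\<bar>?a x - ?a (zero_at x i)\<bar> = \<bar>fst Q $ i\<bar> * \<bar>x $ i\<bar>"
    using sum_minus_sum_zero_at[of "\<lambda>j t. fst Q $ j * t" x i] by (simp add: abs_mult)
  also have "\<dots> \<le> \<bar>fst Q $ i\<bar> * gam X"
    unfolding gam_def using assms x by (intro mult_left_mono abs_le_SUP_abs) auto
  also have "\<dots> = gam X * \<bar>fst Q $ i\<bar> / ?b * ?b"
    using lap_scale_pos[OF assms(2)] by simp
  finally have "\<bar>?a x - ?a (zero_at x i)\<bar> \<le> gam X * \<bar>fst Q $ i\<bar> / ?b * ?b" .
  then show "logratio (measure (K_mech Q x) S) (measure (K_mech Q (zero_at x i)) S)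
      \<le> ereal (gam X * \<bar>fst Q $ i\<bar> / ?b)"
    using pos lap_scale_pos[OF assms(2)] S
    unfolding K_mech_def laplace_shift_def[symmetric] by (intro logratio_laplace_shift_le)
qed

lemma eps_K'_le:
  assumes "bounded Y" "Y \<subseteq> {0..}" and "0 < snd Q" "0 \<le> \<gamma>" "del Y < b'"
  shows "eps_K' \<gamma> (del Y) b' Y Q i
    \<le> ereal (\<gamma> * del Y * \<bar>fst Q $ i\<bar> / (lap_scale (snd Q) * (b' - del Y)))"
  unfolding eps_K'_def
proof (rule Sup_least, clarify)
  fix S c
  assume S: "S \<in> sets borel" and c: "\<forall>j. c $ j \<in> Y"
    and pos: "0 < measure (K'_mech \<gamma> (del Y) b' Q c) S
      \<or> 0 < measure (K'_mech \<gamma> (del Y) b' Q (zero_at c i)) S"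
  let ?b = "lap_scale (snd Q)" and ?\<delta> = "del Y"
  have ci: "0 \<le> c $ i" "c $ i \<le> ?\<delta>"
    using nonneg_le_del assms c by blast+
  then have b': "0 < b'"
    using assms by linarith
  let ?K = "\<gamma> * b' * \<bar>fst Q $ i\<bar> / (?b * (b' - ?\<delta>))"
  have K: "0 \<le> ?K"
    using assms lap_scale_pos[OF assms(3)] b' by simp
  have "\<bar>price_det \<gamma> ?\<delta> b' c Q - price_det \<gamma> ?\<delta> b' (zero_at c i) Q\<bar> = ?K * c $ i"
    unfolding price_det_def right_diff_distrib[symmetric]
    using sum_minus_sum_zero_at[of "\<lambda>j t. t * \<bar>fst Q $ j\<bar>" c i] assms(4,5) ci b'
      lap_scale_pos[OF assms(3)]
    by (simp add: abs_mult)
  also have "\<dots> \<le> ?K * ?\<delta>"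
    using ci(2) by (rule mult_left_mono[OF _ K])
  also have "\<dots> = \<gamma> * ?\<delta> * \<bar>fst Q $ i\<bar> / (?b * (b' - ?\<delta>)) * b'"
    by simp
  finally show "logratio (measure (K'_mech \<gamma> ?\<delta> b' Q c) S)
      (measure (K'_mech \<gamma> ?\<delta> b' Q (zero_at c i)) S)
      \<le> ereal (\<gamma> * ?\<delta> * \<bar>fst Q $ i\<bar> / (?b * (b' - ?\<delta>)))"
    using pos b' S unfolding K'_mech_def laplace_shift_def[symmetric]
    by (intro logratio_laplace_shift_le)
qed

lemma query_seminorm_weighted_abs:
  assumes "\<And>j. 0 \<le> c $ j"
  shows "query_seminorm (\<lambda>q. \<Sum>j\<in>UNIV. c $ j * \<bar>q $ j\<bar>)"
proof
  show "0 \<le> (\<Sum>j\<in>UNIV. c $ j * \<bar>q $ j\<bar>)" for q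
    using assms by (simp add: sum_nonneg)
  show "(\<Sum>j\<in>UNIV. c $ j * \<bar>(q + r) $ j\<bar>)
      \<le> (\<Sum>j\<in>UNIV. c $ j * \<bar>q $ j\<bar>) + (\<Sum>j\<in>UNIV. c $ j * \<bar>r $ j\<bar>)" for q r
    using assms by (simp add: abs_triangle_ineq mult_left_mono sum_mono flip: sum.distrib distrib_left)
  show "(\<Sum>j\<in>UNIV. c $ j * \<bar>(a *s q) $ j\<bar>) = \<bar>a\<bar> * (\<Sum>j\<in>UNIV. c $ j * \<bar>q $ j\<bar>)" for a q
    by (simp add: sum_distrib_left abs_mult mult_ac)
qed

lemma query_seminorm_component_abs: "query_seminorm (\<lambda>q. \<bar>q $ i\<bar>)"
  by standard (auto simp: abs_mult)

lemma E_price_eq_price_det: "0 < b' \<Longrightarrow> E_price \<gamma> \<delta> b' c Q = price_det \<gamma> \<delta> b' c Q"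
  unfolding E_price_def rand_price_def using integral_laplace_affine[of b' _ 1] by simp

lemma price_det_eq_noise_ratio:
  "price_det \<gamma> \<delta> b' c Q = \<gamma> * b' / (b' - \<delta>) * noise_ratio (\<lambda>q. \<Sum>j\<in>UNIV. c $ j * \<bar>q $ j\<bar>) Q"
  by (simp add: price_det_def noise_ratio_def)

lemma E_micro_eq_noise_ratio:
  fixes c :: "real ^ ('n::finite)"
  assumes "0 < b'" "\<delta> \<noteq> b'"
  shows "E_micro \<gamma> \<delta> b' c Q i = \<gamma> * b' * c $ i / (b' - \<delta>) * noise_ratio (\<lambda>q. \<bar>q $ i\<bar>) Q"
proof -
  let ?b = "lap_scale (snd Q)"
  have "E_micro \<gamma> \<delta> b' c Q i
      = (\<gamma> * \<bar>fst Q $ i\<bar> / ?b + \<gamma> * b' * \<delta> * \<bar>fst Q $ i\<bar> / (?b * (b' - \<delta>)) / b') * c $ i"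
    unfolding E_micro_def micro_def rand_price_def Let_def
    using integral_laplace_affine[OF assms(1), of _ "1 / real CARD('n)"] by simp
  also have "\<dots> = \<gamma> * b' * c $ i / (b' - \<delta>) * noise_ratio (\<lambda>q. \<bar>q $ i\<bar>) Q"
    using assms by (cases "?b = 0") (simp_all add: noise_ratio_def field_simps)
  finally show ?thesis .
qed

lemma sum_E_micro_eq_E_price:
  assumes "0 < b'" "\<delta> \<noteq> b'"
  shows "(\<Sum>i\<in>UNIV. E_micro \<gamma> \<delta> b' c Q i) = E_price \<gamma> \<delta> b' c Q"
  using assms
  by (simp add: E_micro_eq_noise_ratio E_price_eq_price_det price_det_eq_noise_ratio noise_ratio_def
      sum_distrib_left sum_divide_distrib mult_ac)

lemma E_micro_ge_privacy_loss:
  assumes "bounded X" "bounded Y" "Y \<subseteq> {0..}" "\<forall>j. c $ j \<in> Y" "del Y < b'"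
    and "0 \<le> gam X" "0 < snd Q"
  shows "ereal (c $ i) * (eps_K X Q i + eps_K' (gam X) (del Y) b' Y Q i)
    \<le> ereal (E_micro (gam X) (del Y) b' c Q i)"
proof -
  let ?\<gamma> = "gam X" and ?\<delta> = "del Y" and ?b = "lap_scale (snd Q)"
  have c: "0 \<le> c $ i" "c $ i \<le> ?\<delta>"
    using nonneg_le_del assms by blast+
  have "ereal (c $ i) * (eps_K X Q i + eps_K' ?\<gamma> ?\<delta> b' Y Q i)
      \<le> ereal (c $ i) * (ereal (?\<gamma> * \<bar>fst Q $ i\<bar> / ?b)
        + ereal (?\<gamma> * ?\<delta> * \<bar>fst Q $ i\<bar> / (?b * (b' - ?\<delta>))))"
    using c assms by (intro ereal_mult_left_mono add_mono eps_K_le eps_K'_le) auto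
  also have "\<dots> = ereal (E_micro ?\<gamma> ?\<delta> b' c Q i)"
    using c assms lap_scale_pos[OF assms(7)]
    by (simp add: E_micro_eq_noise_ratio noise_ratio_def field_simps)
  finally show ?thesis .
qed

theorem proposition12:
  fixes X Y :: "real set" and c :: "real ^ ('n::finite)" and b' :: real
  assumes "bounded X" and "X \<noteq> {}"
    and "bounded Y" and "Y \<subseteq> {0..}"
    and "\<forall>j. c $ j \<in> Y"
    and "b' > del Y"
  shows "arbitrage_free (\<lambda>Q. E_price (gam X) (del Y) b' c Q)
    \<and> (\<forall>i Q. 0 < snd Q \<longrightarrow> fst Q $ i = 0 \<longrightarrow> E_micro (gam X) (del Y) b' c Q i = 0)
    \<and> (\<forall>i. arbitrage_free (\<lambda>Q. E_micro (gam X) (del Y) b' c Q i))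
    \<and> (\<forall>Q. 0 < snd Q \<longrightarrow>
          (\<Sum>i\<in>UNIV. E_micro (gam X) (del Y) b' c Q i) \<le> E_price (gam X) (del Y) b' c Q)
    \<and> (\<forall>i Q. 0 < snd Q \<longrightarrow>
          ereal (E_micro (gam X) (del Y) b' c Q i)
            \<ge> ereal (c $ i) * (eps_K X Q i + eps_K' (gam X) (del Y) b' Y Q i))"
proof -
  let ?\<gamma> = "gam X" and ?\<delta> = "del Y"
  have \<gamma>: "0 \<le> ?\<gamma>"
    using assms(1,2) by (rule gam_nonneg)
  have c: "0 \<le> c $ j" "c $ j \<le> ?\<delta>" for j
    using nonneg_le_del assms(3-5) by blast+
  have b': "0 < b'" "?\<delta> \<noteq> b'"
    using order_trans[OF c] assms(6) by linarith+
  have "arbitrage_free (\<lambda>Q. E_price ?\<gamma> ?\<delta> b' c Q)"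
    by (rule query_seminorm.arbitrage_free_scaled_noise_ratio[OF query_seminorm_weighted_abs[OF c(1)],
          where K = "?\<gamma> * b' / (b' - ?\<delta>)"])
      (use \<gamma> assms(6) b' in \<open>simp_all add: E_price_eq_price_det price_det_eq_noise_ratio\<close>)
  moreover have "arbitrage_free (\<lambda>Q. E_micro ?\<gamma> ?\<delta> b' c Q i)" for i
    by (rule query_seminorm.arbitrage_free_scaled_noise_ratio[OF query_seminorm_component_abs[of i],
          where K = "?\<gamma> * b' * c $ i / (b' - ?\<delta>)"])
      (use \<gamma> c assms(6) b' in \<open>simp_all add: E_micro_eq_noise_ratio\<close>)
  moreover have "E_micro ?\<gamma> ?\<delta> b' c Q i = 0" if "fst Q $ i = 0" for Q i
    using b' that by (simp add: E_micro_eq_noise_ratio noise_ratio_def)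
  moreover have "(\<Sum>i\<in>UNIV. E_micro ?\<gamma> ?\<delta> b' c Q i) = E_price ?\<gamma> ?\<delta> b' c Q" for Q
    using b' by (rule sum_E_micro_eq_E_price)
  moreover have "ereal (c $ i) * (eps_K X Q i + eps_K' ?\<gamma> ?\<delta> b' Y Q i)
      \<le> ereal (E_micro ?\<gamma> ?\<delta> b' c Q i)" if "0 < snd Q" for Q i
    using assms \<gamma> that by (intro E_micro_ge_privacy_loss)
  ultimately show ?thesis
    by simp
qed

end
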